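(* Let $p$ be an odd prime, $m,r$ positive integers and $k\in\{0,1,\dots,mp^r\}$. Then $$k\binom{2k}{k}\binom{2(mp^r-k)}{mp^r-k}\equiv0\pmod{p^r}.$$ *)

theory Defs
  imports Main "HOL-Computational_Algebra.Primes" "HOL-Number_Theory.Cong"
begin

end

theory Submission
  imports Defs
begin

text \<open>By Legendre's formula, the multiplicity of \<open>p\<close> in \<open>(2k choose k)\<close> is the number of
  \<open>j \<ge> 1\<close> with \<open>2 (k mod p^j) \<ge> p^j\<close>, i.e.\ of carries when adding \<open>k + k\<close> in base \<open>p\<close>.
  Let \<open>k + l\<close> be divisible by \<open>p^r\<close>. For each \<open>j \<le> r\<close>, either \<open>p^j\<close> divides \<open>k\<close>, or the
  residues of \<open>k\<close> and \<open>l\<close> modulo \<open>p^j\<close> are nonzero and add up to \<open>p^j\<close>, so one of them is at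
  least \<open>p^j / 2\<close> and one of the two central binomial coefficients carries at level \<open>j\<close>.
  Each of the \<open>r\<close> levels thus contributes a factor \<open>p\<close> to \<open>k (2k choose k) (2l choose l)\<close>.\<close>

lemma multiplicity_eq_sum_prime_power_dvd:
  fixes p x N :: nat
  assumes "prime p" "0 < x" "x < p ^ N"
  shows "multiplicity p x = (\<Sum>j\<in>{1..N}. if p ^ j dvd x then 1 else 0)"
proof -
  have dvd_iff: "p ^ j dvd x \<longleftrightarrow> j \<le> multiplicity p x" for j
    using assms(1,2) by (intro power_dvd_iff_le_multiplicity) auto
  have "multiplicity p x \<le> N"
  proof (rule ccontr)
    assume "\<not> multiplicity p x \<le> N"
    then have "p ^ N \<le> x"
      using assms(2) dvd_iff[of N] by (auto intro: dvd_imp_le)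
    with assms(3) show False
      by simp
  qed
  then have "{1..N} \<inter> {j. p ^ j dvd x} = {1..multiplicity p x}"
    by (auto simp: dvd_iff)
  then show ?thesis
    by (simp add: sum.If_cases)
qed

lemma multiplicity_fact:
  fixes p n N :: nat
  assumes "prime p" "n < p ^ N"
  shows "multiplicity p (fact n) = (\<Sum>j\<in>{1..N}. n div p ^ j)"
  using assms(2)
proof (induction n)
  case 0
  then show ?case by simp
next
  case (Suc n)
  have "multiplicity p (fact (Suc n) :: nat) = multiplicity p (Suc n * fact n)"
    by (simp add: fact_Suc)
  also have "\<dots> = multiplicity p (Suc n) + multiplicity p (fact n :: nat)"
    using assms(1) by (intro prime_elem_multiplicity_mult_distrib) auto
  also have "\<dots> = (\<Sum>j\<in>{1..N}. (if p ^ j dvd Suc n then 1 else 0) + n div p ^ j)"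
    using multiplicity_eq_sum_prime_power_dvd[OF assms(1), of "Suc n" N] Suc
    by (simp add: sum.distrib)
  also have "\<dots> = (\<Sum>j\<in>{1..N}. Suc n div p ^ j)"
    by (intro sum.cong) (simp_all add: div_Suc dvd_eq_mod_eq_0)
  finally show ?case .
qed

lemma multiplicity_central_binomial:
  fixes p k N :: nat
  assumes "prime p" "2 * k < p ^ N"
  shows "multiplicity p ((2 * k) choose k) = (\<Sum>j\<in>{1..N}. 2 * (k mod p ^ j) div p ^ j)"
proof -
  have "fact (2 * k) = ((2 * k) choose k) * (fact k * (fact k :: nat))"
    using binomial_fact_lemma[of k "2 * k"] by (simp add: mult_2 algebra_simps)
  then have "multiplicity p (fact (2 * k) :: nat)
      = multiplicity p ((2 * k) choose k) + 2 * multiplicity p (fact k :: nat)"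
    using assms(1) by (simp add: prime_elem_multiplicity_mult_distrib)
  moreover have "(\<Sum>j\<in>{1..N}. 2 * k div p ^ j)
      = 2 * (\<Sum>j\<in>{1..N}. k div p ^ j) + (\<Sum>j\<in>{1..N}. 2 * (k mod p ^ j) div p ^ j)"
  proof -
    have "2 * k div p ^ j = 2 * (k div p ^ j) + 2 * (k mod p ^ j) div p ^ j" for j
    proof -
      have "2 * k = 2 * (k mod p ^ j) + 2 * (k div p ^ j) * p ^ j"
        using div_mult_mod_eq[of k "p ^ j"] by linarith
      then show ?thesis
        using assms(1) by (simp add: prime_gt_0_nat)
    qed
    then show ?thesis
      by (simp add: sum.distrib sum_distrib_left)
  qed
  moreover have "multiplicity p (fact (2 * k) :: nat) = (\<Sum>j\<in>{1..N}. 2 * k div p ^ j)"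
    "multiplicity p (fact k :: nat) = (\<Sum>j\<in>{1..N}. k div p ^ j)"
    using multiplicity_fact[OF assms] multiplicity_fact[OF assms(1), of k N] assms(2) by auto
  ultimately show ?thesis
    by linarith
qed

lemma complementary_residue_at_least_half:
  fixes q k l :: nat
  assumes "q dvd k + l" "\<not> q dvd k"
  shows "q \<le> 2 * (k mod q) \<or> q \<le> 2 * (l mod q)"
proof -
  have "0 < q"
    using assms by (cases q) auto
  then have "k mod q < q" "l mod q < q" "0 < k mod q"
    using assms(2) by (auto simp: dvd_eq_mod_eq_0)
  moreover obtain c where c: "k mod q + l mod q = q * c"
    using assms(1) by (metis dvd_eq_mod_eq_0 mod_add_eq mod_mod_trivial dvdE)
  ultimately have "0 < q * c" "q * c < q * 2"
    by linarith+
  then have "c = 1"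
    using mult_less_cancel1[of q c 2] by simp
  with c have "k mod q + l mod q = q"
    by simp
  then show ?thesis
    by linarith
qed

lemma prime_power_dvd_central_binomial_product:
  fixes p r k l :: nat
  assumes "prime p" "p ^ r dvd k + l"
  shows "p ^ r dvd k * ((2 * k) choose k) * ((2 * l) choose l)"
proof (cases "k = 0")
  case True
  then show ?thesis by simp
next
  case False
  define N where "N = r + 2 * (k + l)"
  have "N < 2 ^ N"
    by (rule less_exp)
  also have "\<dots> \<le> p ^ N"
    using assms(1) by (simp add: power_mono prime_ge_2_nat)
  finally have "N < p ^ N" .
  then have bounds: "r \<le> N" "k < p ^ N" "2 * k < p ^ N" "2 * l < p ^ N"
    using N_def by auto
  define carry where "carry a j = 2 * (a mod p ^ j) div p ^ j" for a j
  define digit_term where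
    "digit_term j = (if p ^ j dvd k then 1 else 0) + carry k j + carry l j" for j
  have "1 \<le> digit_term j" if "j \<in> {1..r}" for j
  proof (cases "p ^ j dvd k")
    case False
    have "p ^ j dvd k + l"
      using that assms(2) by (meson atLeastAtMost_iff dvd_trans le_imp_power_dvd)
    then have "p ^ j \<le> 2 * (k mod p ^ j) \<or> p ^ j \<le> 2 * (l mod p ^ j)"
      using False by (rule complementary_residue_at_least_half)
    moreover have "0 < p ^ j"
      using assms(1) by (simp add: prime_gt_0_nat)
    ultimately have "0 < carry k j \<or> 0 < carry l j"
      by (auto simp: carry_def div_greater_zero_iff)
    then show ?thesis
      by (auto simp: digit_term_def)
  qed (simp add: digit_term_def)
  then have "r \<le> (\<Sum>j\<in>{1..r}. digit_term j)"
    using sum_mono[of "{1..r}" "\<lambda>_. 1::nat" digit_term] by simp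
  also have "\<dots> \<le> (\<Sum>j\<in>{1..N}. digit_term j)"
    using bounds(1) by (intro sum_mono2) auto
  also have "\<dots> = multiplicity p k + multiplicity p ((2 * k) choose k)
      + multiplicity p ((2 * l) choose l)"
    using multiplicity_eq_sum_prime_power_dvd[OF assms(1) _ bounds(2)] False
      multiplicity_central_binomial[OF assms(1) bounds(3)]
      multiplicity_central_binomial[OF assms(1) bounds(4)]
    by (simp add: digit_term_def carry_def sum.distrib)
  also have "\<dots> = multiplicity p (k * ((2 * k) choose k) * ((2 * l) choose l))"
    using assms(1) False by (simp add: prime_elem_multiplicity_mult_distrib)
  finally show ?thesis
    by (rule multiplicity_dvd')
qed

theorem lemma2p12:
  fixes p m r k :: nat
  assumes "prime p" and "odd p" and "m > 0" and "r > 0" and "k \<le> m * p ^ r"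
  shows "[k * ((2 * k) choose k) * ((2 * (m * p ^ r - k)) choose (m * p ^ r - k)) = 0] (mod p ^ r)"
proof -
  have "p ^ r dvd k + (m * p ^ r - k)"
    using assms(5) by simp
  then show ?thesis
    using prime_power_dvd_central_binomial_product[OF assms(1)] by (simp add: cong_0_iff)
qed

end
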